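(* Let $p$ be a prime and $K$ a finite extension of $\mathbb{Q}_p$. Suppose that $B$ is a nonempty finite set of elements of $K$ such that $|\beta|_p<1$ for each $\beta\in B$. For each $\beta\in B$ let $c_\beta:\mathbb{Z}_p\to K$ be a continuous function, and for $n\in\mathbb N$ define $s(n)=\sum_{\beta\in B}c_\beta(n)\beta^n$. If there is a twisted interpolation of $s(n)_{n\ge0}$ to $\mathbb{Z}_p$, then $s(n)=0$ for all $n\ge 0$.
   Context: $\mathbb N=\{0,1,2,\dots\}$; $|\cdot|_p$ is the unique absolute value on $K$ extending the $p$-adic one. Let $q\ge1$ be a power of $p$. A twisted interpolation of $s(n)_{n\ge0}$ to $\mathbb{Z}_p$ is a family $\{(s_j,A_j):j\in J\}$ where $\mathbb N=\bigcup_{j\in J}A_j$ is a finite partition with each $A_j$ dense in $r+q\mathbb{Z}_p$ for some $0\le r\le q-1$, $L$ is a finite extension of $\mathbb{Q}_p$, each $s_j:\mathbb{Z}_p\to L$ is continuous, and $s(n)=s_j(n)$ for all $n\in A_j$ and $j\in J$. *)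

theory Defs
  imports "HOL-Analysis.Analysis" "HOL-Computational_Algebra.Primes"
begin

text \<open>Ambient setting: a field F (a type 'a) carrying a real-valued absolute value av
  which is non-archimedean, complete, and restricts to the normalised p-adic absolute
  value on the integers (hence on the rationals).  Inside such an F (e.g. C_p), Q_p is
  the closure of Q, Z_p is the closure of Z, and finite extensions of Q_p are the
  subfields of F containing Q_p that are finite-dimensional over Q_p.  The absolute
  value of F restricted to such a subfield is the unique extension of the p-adic one.\<close>

definition padic_valued_field :: "nat \<Rightarrow> ('a::field \<Rightarrow> real) \<Rightarrow> bool" where
  "padic_valued_field p av \<longleftrightarrow>
     (\<forall>x. av x \<ge> 0) \<and>
     (\<forall>x. av x = 0 \<longleftrightarrow> x = 0) \<and>
     (\<forall>x y. av (x * y) = av x * av y) \<and>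
     (\<forall>x y. av (x + y) \<le> max (av x) (av y)) \<and>
     (\<forall>n::int. n \<noteq> 0 \<longrightarrow> av (of_int n) = inverse (real p ^ multiplicity (int p) n)) \<and>
     (\<forall>X::nat \<Rightarrow> 'a.
        (\<forall>e>0. \<exists>N. \<forall>m\<ge>N. \<forall>n\<ge>N. av (X m - X n) < e) \<longrightarrow>
        (\<exists>l. \<forall>e>0. \<exists>N. \<forall>n\<ge>N. av (X n - l) < e))"

definition Zp :: "('a::field \<Rightarrow> real) \<Rightarrow> 'a set" where
  "Zp av = {x. \<forall>e>0. \<exists>n::int. av (x - of_int n) < e}"

definition Qp :: "('a::field_char_0 \<Rightarrow> real) \<Rightarrow> 'a set" where
  "Qp av = {x. \<forall>e>0. \<exists>q::rat. av (x - of_rat q) < e}"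

definition is_subfield :: "'a::field set \<Rightarrow> bool" where
  "is_subfield K \<longleftrightarrow> 0 \<in> K \<and> 1 \<in> K \<and>
     (\<forall>x\<in>K. \<forall>y\<in>K. x + y \<in> K \<and> x * y \<in> K) \<and>
     (\<forall>x\<in>K. - x \<in> K \<and> inverse x \<in> K)"

definition finite_ext_Qp :: "('a::field_char_0 \<Rightarrow> real) \<Rightarrow> 'a set \<Rightarrow> bool" where
  "finite_ext_Qp av K \<longleftrightarrow> is_subfield K \<and> Qp av \<subseteq> K \<and>
     (\<exists>S. finite S \<and> S \<subseteq> K \<and>
        (\<forall>x\<in>K. \<exists>c. (\<forall>s\<in>S. c s \<in> Qp av) \<and> x = (\<Sum>s\<in>S. c s * s)))"

definition cont_Zp_into :: "('a::field \<Rightarrow> real) \<Rightarrow> 'a set \<Rightarrow> ('a \<Rightarrow> 'a) \<Rightarrow> bool" where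
  "cont_Zp_into av L f \<longleftrightarrow> (\<forall>x\<in>Zp av. f x \<in> L) \<and>
     (\<forall>x\<in>Zp av. \<forall>e>0. \<exists>d>0. \<forall>y\<in>Zp av. av (y - x) < d \<longrightarrow> av (f y - f x) < e)"

definition dense_in_class :: "('a::field \<Rightarrow> real) \<Rightarrow> nat set \<Rightarrow> nat \<Rightarrow> nat \<Rightarrow> bool" where
  "dense_in_class av A r q \<longleftrightarrow>
     (\<forall>n\<in>A. \<exists>z\<in>Zp av. of_nat n = of_nat r + of_nat q * z) \<and>
     (\<forall>z\<in>Zp av. \<forall>e>0. \<exists>n\<in>A. av (of_nat n - (of_nat r + of_nat q * z)) < e)"

definition twisted_interpolation ::
  "nat \<Rightarrow> ('a::field_char_0 \<Rightarrow> real) \<Rightarrow> (nat \<Rightarrow> 'a) \<Rightarrow> nat \<Rightarrow> 'j set \<Rightarrow> ('j \<Rightarrow> nat set)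
     \<Rightarrow> 'a set \<Rightarrow> ('j \<Rightarrow> 'a \<Rightarrow> 'a) \<Rightarrow> bool" where
  "twisted_interpolation p av s q J A L sj \<longleftrightarrow>
     (\<exists>k. q = p ^ k) \<and> q \<ge> 1 \<and>
     finite J \<and> (\<Union>j\<in>J. A j) = UNIV \<and>
     (\<forall>i\<in>J. \<forall>j\<in>J. i \<noteq> j \<longrightarrow> A i \<inter> A j = {}) \<and>
     (\<forall>j\<in>J. \<exists>r. r \<le> q - 1 \<and> dense_in_class av (A j) r q) \<and>
     finite_ext_Qp av L \<and>
     (\<forall>j\<in>J. cont_Zp_into av L (sj j)) \<and>
     (\<forall>j\<in>J. \<forall>n\<in>A j. s n = sj j (of_nat n))"

definition has_twisted_interpolation :: "nat \<Rightarrow> ('a::field_char_0 \<Rightarrow> real) \<Rightarrow> (nat \<Rightarrow> 'a) \<Rightarrow> bool" where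
  "has_twisted_interpolation p av s \<longleftrightarrow>
     (\<exists>q (J::nat set) A L sj. twisted_interpolation p av s q J A L sj)"

end

theory Submission
  imports Defs
begin

text \<open>Let \<open>n\<close> run through the natural numbers \<open>n \<noteq> n\<^sub>0\<close> converging \<open>p\<close>-adically to \<open>n\<^sub>0\<close>.
  Such \<open>n\<close> tend to infinity in the archimedean sense, so \<open>|\<beta>\<^sup>n|\<^sub>p \<rightarrow> 0\<close>, while the continuous
  \<open>c\<^sub>\<beta>(n)\<close> stay bounded; hence \<open>s(n) \<rightarrow> 0\<close>. If \<open>n\<^sub>0 \<in> A\<^sub>j\<close>, density of \<open>A\<^sub>j\<close> in \<open>r + q\<int>\<^sub>p\<close>
  provides such \<open>n\<close> inside \<open>A\<^sub>j\<close>, where \<open>s = s\<^sub>j\<close>; continuity of \<open>s\<^sub>j\<close> then gives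
  \<open>s(n\<^sub>0) = s\<^sub>j(n\<^sub>0) = 0\<close>.\<close>

locale padic_abs_value =
  fixes p :: nat and av :: "'a::field_char_0 \<Rightarrow> real"
  assumes prime: "prime p"
    and valued: "padic_valued_field p av"
begin

lemma av_nonneg: "av x \<ge> 0"
  using valued by (simp add: padic_valued_field_def)

lemma av_eq_0_iff: "av x = 0 \<longleftrightarrow> x = 0"
  using valued by (simp add: padic_valued_field_def)

lemma av_mult: "av (x * y) = av x * av y"
  using valued by (simp add: padic_valued_field_def)

lemma av_add_le_max: "av (x + y) \<le> max (av x) (av y)"
  using valued by (simp add: padic_valued_field_def)

lemma av_of_int: "n \<noteq> 0 \<Longrightarrow> av (of_int n) = inverse (real p ^ multiplicity (int p) n)"
  using valued by (simp add: padic_valued_field_def)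

lemma av_zero [simp]: "av 0 = 0"
  by (simp add: av_eq_0_iff)

lemma av_one: "av 1 = 1"
  using av_of_int[of 1] by simp

lemma av_minus: "av (- x) = av x"
proof -
  have "av (-1) * av (-1) = 1"
    using av_mult[of "-1" "-1"] av_one by simp
  then have "av (-1) = 1"
    using av_nonneg[of "-1"] abs_square_eq_1[of "av (-1)"] by (simp add: power2_eq_square)
  then show ?thesis
    using av_mult[of "-1" x] by simp
qed

lemma av_diff_commute: "av (x - y) = av (y - x)"
  using av_minus[of "x - y"] by simp

lemma av_add_le: "av (x + y) \<le> av x + av y"
  using av_add_le_max[of x y] av_nonneg[of x] av_nonneg[of y] by linarith

lemma av_power: "av (x ^ n) = av x ^ n"
  by (induction n) (simp_all add: av_one av_mult)

lemma av_sum_le: "av (sum f S) \<le> (\<Sum>x\<in>S. av (f x))"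
proof (induction S rule: infinite_finite_induct)
  case (insert x F)
  then show ?case
    using av_add_le[of "f x" "sum f F"] by simp
qed simp_all

lemma av_of_nat_prime_power: "av (of_nat (p ^ m)) = inverse (real p ^ m)"
  using av_of_int[of "int p ^ m"] prime prime_gt_0_nat
  by simp

lemma of_nat_in_Zp: "of_nat n \<in> Zp av"
  unfolding Zp_def by (auto intro!: exI[of _ "int n"])

lemma Zp_add_of_nat: "z \<in> Zp av \<Longrightarrow> z + of_nat t \<in> Zp av"
proof (unfold Zp_def, safe)
  fix e :: real
  assume "\<forall>e>0. \<exists>n::int. av (z - of_int n) < e" "e > 0"
  then obtain n :: int where "av (z - of_int n) < e"
    by blast
  then show "\<exists>n::int. av (z + of_nat t - of_int n) < e"
    by (intro exI[of _ "n + int t"]) (simp add: algebra_simps)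
qed

definition padic_approach :: "nat \<Rightarrow> nat filter" where
  "padic_approach n0 =
     (INF \<delta>\<in>{0<..}. principal {n. n \<noteq> n0 \<and> av (of_nat n - of_nat n0) < \<delta>})"

lemma eventually_padic_approach:
  "eventually P (padic_approach n0) \<longleftrightarrow>
     (\<exists>\<delta>>0. \<forall>n. n \<noteq> n0 \<longrightarrow> av (of_nat n - of_nat n0) < \<delta> \<longrightarrow> P n)"
  unfolding padic_approach_def
  by (subst eventually_INF_base)
    (auto simp: eventually_principal intro!: bexI[where x = "min a b" for a b :: real])

lemma padic_approach_le_sequentially: "padic_approach n0 \<le> sequentially"
proof (unfold le_sequentially, intro allI)
  fix N :: nat
  define \<delta> where "\<delta> = Min (insert 1 ((\<lambda>m. av (of_nat m - of_nat n0)) ` ({..<N} - {n0})))"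
  have "\<delta> > 0"
    unfolding \<delta>_def by (subst Min_gr_iff) (auto simp: av_eq_0_iff order.strict_iff_order av_nonneg)
  moreover have "N \<le> n" if "n \<noteq> n0" "av (of_nat n - of_nat n0) < \<delta>" for n
  proof (rule ccontr)
    assume "\<not> N \<le> n"
    then have "\<delta> \<le> av (of_nat n - of_nat n0)"
      using \<open>n \<noteq> n0\<close> unfolding \<delta>_def by (intro Min_le) auto
    with that show False
      by simp
  qed
  ultimately show "eventually (\<lambda>n. N \<le> n) (padic_approach n0)"
    unfolding eventually_padic_approach by blast
qed

lemma tendsto_av_cont_Zp_padic_approach:
  assumes "cont_Zp_into av L f"
  shows "((\<lambda>n. av (f (of_nat n) - f (of_nat n0))) \<longlongrightarrow> 0) (padic_approach n0)"
proof (rule order_tendstoI)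
  fix e :: real
  assume "e > 0"
  then obtain d where "d > 0" "\<forall>y\<in>Zp av. av (y - of_nat n0) < d \<longrightarrow> av (f y - f (of_nat n0)) < e"
    using assms of_nat_in_Zp unfolding cont_Zp_into_def by blast
  then show "eventually (\<lambda>n. av (f (of_nat n) - f (of_nat n0)) < e) (padic_approach n0)"
    unfolding eventually_padic_approach using of_nat_in_Zp by blast
qed (auto intro: always_eventually less_le_trans[OF _ av_nonneg])

lemma tendsto_av_exp_sum_padic_approach:
  assumes "finite B" and "\<forall>\<beta>\<in>B. av \<beta> < 1" and "\<forall>\<beta>\<in>B. cont_Zp_into av L (c \<beta>)"
  shows "((\<lambda>n. av (\<Sum>\<beta>\<in>B. c \<beta> (of_nat n) * \<beta> ^ n)) \<longlongrightarrow> 0) (padic_approach n0)"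
proof (rule tendsto_sandwich[OF _ _ tendsto_const])
  show "eventually (\<lambda>n. av (\<Sum>\<beta>\<in>B. c \<beta> (of_nat n) * \<beta> ^ n) \<le>
      (\<Sum>\<beta>\<in>B. av (c \<beta> (of_nat n) * \<beta> ^ n))) (padic_approach n0)"
    by (intro always_eventually allI av_sum_le)
  have "((\<lambda>n. av (c \<beta> (of_nat n) * \<beta> ^ n)) \<longlongrightarrow> 0) (padic_approach n0)" if "\<beta> \<in> B" for \<beta>
  proof (rule tendsto_sandwich[OF _ _ tendsto_const])
    let ?bound = "\<lambda>n. (av (c \<beta> (of_nat n) - c \<beta> (of_nat n0)) + av (c \<beta> (of_nat n0))) * av \<beta> ^ n"
    have "(\<lambda>n. av \<beta> ^ n) \<longlonglongrightarrow> 0"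
      using assms(2) \<open>\<beta> \<in> B\<close> by (intro LIMSEQ_power_zero) (simp add: av_nonneg)
    then have "((\<lambda>n. av \<beta> ^ n) \<longlongrightarrow> 0) (padic_approach n0)"
      by (rule tendsto_mono[OF padic_approach_le_sequentially])
    moreover have "((\<lambda>n. av (c \<beta> (of_nat n) - c \<beta> (of_nat n0)) + av (c \<beta> (of_nat n0)))
        \<longlongrightarrow> 0 + av (c \<beta> (of_nat n0))) (padic_approach n0)"
      using assms(3) \<open>\<beta> \<in> B\<close> by (intro tendsto_add tendsto_const tendsto_av_cont_Zp_padic_approach) auto
    ultimately show "(?bound \<longlongrightarrow> 0) (padic_approach n0)"
      using tendsto_mult by fastforce
    have "av (c \<beta> (of_nat n) * \<beta> ^ n) \<le> ?bound n" for n
      using av_add_le[of "c \<beta> (of_nat n) - c \<beta> (of_nat n0)" "c \<beta> (of_nat n0)"]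
      by (auto simp: av_mult av_power av_nonneg intro: mult_right_mono)
    then show "eventually (\<lambda>n. av (c \<beta> (of_nat n) * \<beta> ^ n) \<le> ?bound n) (padic_approach n0)"
      by (simp add: always_eventually)
  qed (simp add: av_nonneg always_eventually)
  then show "((\<lambda>n. \<Sum>\<beta>\<in>B. av (c \<beta> (of_nat n) * \<beta> ^ n)) \<longlongrightarrow> 0) (padic_approach n0)"
    by (rule tendsto_null_sum)
qed (simp add: av_nonneg always_eventually)

lemma tendsto_av_prime_power: "(\<lambda>m. av (of_nat (p ^ m))) \<longlonglongrightarrow> 0"
  using prime prime_gt_1_nat
  by (simp add: av_of_nat_prime_power del: of_nat_power) (intro LIMSEQ_inverse_realpow_zero; simp)

text \<open>The points \<open>n\<^sub>0 + p\<^sup>m\<close> of \<open>r + p\<^sup>k\<int>\<^sub>p\<close> converge to \<open>n\<^sub>0\<close>, and density yields elements of \<open>A\<close>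
  closer to them than \<open>|p\<^sup>m|\<^sub>p\<close>, hence different from \<open>n\<^sub>0\<close>.\<close>

lemma frequently_padic_approach_dense_in_class:
  assumes dense: "dense_in_class av A r (p ^ k)" and "n0 \<in> A"
  shows "\<exists>\<^sub>F n in padic_approach n0. n \<in> A"
proof -
  have "\<exists>n\<in>A. n \<noteq> n0 \<and> av (of_nat n - of_nat n0) < \<delta>" if "\<delta> > 0" for \<delta>
  proof -
    have "\<forall>\<^sub>F m in sequentially. k \<le> m \<and> av (of_nat (p ^ m)) < \<delta>"
      using eventually_ge_at_top order_tendstoD(2)[OF tendsto_av_prime_power \<open>\<delta> > 0\<close>]
      by (rule eventually_conj)
    then obtain m where "k \<le> m" and small: "av (of_nat (p ^ m)) < \<delta>"
      unfolding eventually_sequentially by blast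
    let ?h = "of_nat (p ^ m) :: 'a"
    obtain z0 where "z0 \<in> Zp av" and z0: "of_nat n0 = of_nat r + of_nat (p ^ k) * z0"
      using dense \<open>n0 \<in> A\<close> unfolding dense_in_class_def by blast
    have "of_nat r + of_nat (p ^ k) * (z0 + of_nat (p ^ (m - k))) = of_nat n0 + ?h"
      using z0 \<open>k \<le> m\<close> by (simp add: algebra_simps flip: power_add)
    moreover have "av ?h > 0"
      using prime by (simp add: av_of_nat_prime_power prime_gt_0_nat del: of_nat_power)
    ultimately obtain n where "n \<in> A" and close: "av (of_nat n - (of_nat n0 + ?h)) < av ?h"
      using dense Zp_add_of_nat[OF \<open>z0 \<in> Zp av\<close>] unfolding dense_in_class_def by metis
    have "av (of_nat n - of_nat n0) \<le> max (av (of_nat n - (of_nat n0 + ?h))) (av ?h)"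
      using av_add_le_max[of "of_nat n - (of_nat n0 + ?h)" ?h] by simp
    with close small have "av (of_nat n - of_nat n0) < \<delta>"
      by linarith
    moreover have "n \<noteq> n0"
      using close av_minus[of ?h] by auto
    ultimately show ?thesis
      using \<open>n \<in> A\<close> by blast
  qed
  then show ?thesis
    unfolding frequently_def eventually_padic_approach by blast
qed

lemma eq_0_if_frequently_eq_av_null:
  assumes "((\<lambda>x. av (f x)) \<longlongrightarrow> 0) F" and "((\<lambda>x. av (g x - y)) \<longlongrightarrow> 0) F"
    and "\<exists>\<^sub>F x in F. f x = g x"
  shows "y = 0"
proof (rule ccontr)
  assume "y \<noteq> 0"
  then have "av y > 0"
    using av_nonneg[of y] by (simp add: av_eq_0_iff order.strict_iff_order)
  then have "\<forall>\<^sub>F x in F. av (f x) < av y \<and> av (g x - y) < av y"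
    using assms(1,2) by (intro eventually_conj order_tendstoD(2))
  then have "\<forall>\<^sub>F x in F. f x \<noteq> g x"
  proof eventually_elim
    case (elim x)
    then show ?case
      using av_add_le_max[of "f x" "- (g x - y)"] av_diff_commute[of y "g x"] by auto
  qed
  with assms(3) show False
    by (simp add: frequently_def)
qed

end

theorem theorem3p7:
  fixes p :: nat and av :: "'a::field_char_0 \<Rightarrow> real"
    and K :: "'a set" and B :: "'a set" and c :: "'a \<Rightarrow> 'a \<Rightarrow> 'a"
  assumes "prime p"
    and "padic_valued_field p av"
    and "finite_ext_Qp av K"
    and "finite B" and "B \<noteq> {}" and "B \<subseteq> K"
    and "\<forall>\<beta>\<in>B. av \<beta> < 1"
    and "\<forall>\<beta>\<in>B. cont_Zp_into av K (c \<beta>)"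
    and "has_twisted_interpolation p av (\<lambda>n. \<Sum>\<beta>\<in>B. c \<beta> (of_nat n) * \<beta> ^ n)"
  shows "\<forall>n. (\<Sum>\<beta>\<in>B. c \<beta> (of_nat n) * \<beta> ^ n) = 0"
proof
  fix n0 :: nat
  interpret padic_abs_value p av
    using assms(1,2) by unfold_locales
  define s where "s n = (\<Sum>\<beta>\<in>B. c \<beta> (of_nat n) * \<beta> ^ n)" for n
  obtain q J A L sj where interp: "twisted_interpolation p av s q (J :: nat set) A L sj"
    using assms(9) unfolding has_twisted_interpolation_def s_def by blast
  then obtain k where "q = p ^ k"
    unfolding twisted_interpolation_def by blast
  from interp obtain j where "j \<in> J" and "n0 \<in> A j"
    unfolding twisted_interpolation_def by blast
  with interp obtain r where "dense_in_class av (A j) r q"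
    and "cont_Zp_into av L (sj j)" and agree: "\<forall>n\<in>A j. s n = sj j (of_nat n)"
    unfolding twisted_interpolation_def by blast
  have "sj j (of_nat n0) = 0"
  proof (rule eq_0_if_frequently_eq_av_null)
    show "((\<lambda>n. av (s n)) \<longlongrightarrow> 0) (padic_approach n0)"
      unfolding s_def using assms(4,7,8) by (rule tendsto_av_exp_sum_padic_approach)
    show "((\<lambda>n. av (sj j (of_nat n) - sj j (of_nat n0))) \<longlongrightarrow> 0) (padic_approach n0)"
      using \<open>cont_Zp_into av L (sj j)\<close> by (rule tendsto_av_cont_Zp_padic_approach)
    show "\<exists>\<^sub>F n in padic_approach n0. s n = sj j (of_nat n)"
      using frequently_padic_approach_dense_in_class[of "A j" r k n0] \<open>q = p ^ k\<close>
        \<open>dense_in_class av (A j) r q\<close> \<open>n0 \<in> A j\<close> agree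
      by (auto elim: frequently_elim1)
  qed
  then show "s n0 = 0"
    using agree \<open>n0 \<in> A j\<close> by simp
qed

end
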